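(* Let $m\ge n$ be positive integers of the same parity, and define \[ h(z)=\frac{1}{\sqrt2}\Bigl\{\bigl(\sqrt{z^2+1}+1\bigr)^{\frac{m+n}{2}}\bigl(\sqrt{z^2+1}+z\bigr)^{\frac{m-n}{2}}+(-1)^n\bigl(\sqrt{z^2+1}-1\bigr)^{\frac{m+n}{2}}\bigl(\sqrt{z^2+1}-z\bigr)^{\frac{m-n}{2}}\Bigr\}, \] which is a polynomial in $z$ (with the branch $\sqrt{z^2+1}=1$ at $z=0$). Let $\rho(t)=T_n(1-2t)+T_m(1+2t)$, whose degree is $m$ if $m>n$ and $2\lfloor m/2\rfloor$ if $m=n$. Then (i) $\deg h=\deg\rho$; (ii) $h(0)>0$; (iii) $h(z)\neq0$ for all $|z|<1$.
   Context: $T_k$ denotes the Chebyshev polynomial of the first kind, $T_k(\cos\theta)=\cos k\theta$. *)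

theory Defs
  imports "HOL-Analysis.Analysis" "HOL-Computational_Algebra.Polynomial"
begin

fun chebT :: "nat \<Rightarrow> real poly" where
  "chebT 0 = 1"
| "chebT (Suc 0) = [:0, 1:]"
| "chebT (Suc (Suc k)) = [:0, 2:] * chebT (Suc k) - chebT k"

definition rho :: "nat \<Rightarrow> nat \<Rightarrow> real poly" where
  "rho m n = pcompose (chebT n) [:1, -2:] + pcompose (chebT m) [:1, 2:]"

text \<open>The expression is
  invariant under replacing the square root by its negative (since m and n have
  the same parity), so the branch choice is immaterial; at z = 0 the principal
  branch gives 1.\<close>
definition hfun :: "nat \<Rightarrow> nat \<Rightarrow> complex \<Rightarrow> complex" where
  "hfun m n z = (let s = csqrt (z^2 + 1) in
     (1 / complex_of_real (sqrt 2)) *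
     ((s + 1) ^ ((m + n) div 2) * (s + z) ^ ((m - n) div 2)
      + (-1) ^ n * (s - 1) ^ ((m + n) div 2) * (s - z) ^ ((m - n) div 2)))"

end

theory Submission
  imports Defs "HOL-Real_Asymp.Real_Asymp"
begin

(*
  Degrees are read off growth at infinity: a polynomial p has degree d exactly when
  p(x)/x^d tends to a nonzero limit as x -> +oo. For rho the limit comes from the
  leading coefficient 2^(k-1) of T_k, except when m = n is odd: then T_n is odd,
  rho(t) = T_n(1+2t) - T_n(2t-1) is a finite difference, and its growth is read off
  at x^(n-1). Expanding both products in h binomially in s = sqrt(z^2+1), the odd
  powers of s cancel (this is where the parity of m + n enters), so h is a polynomial
  in z; its growth comes from (s +- 1)/x -> 1, (s + x)/x -> 2 and (s - x)/x -> 0.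

  For |z| < 1 put v = s + z, so that s - z = 1/v and 2v(s +- 1) = (v +- 1)^2.
  A zero of h forces (|s-1|/|s+1|)^k = |v|^(2j) with k = (m+n)/2 > j = (m-n)/2.
  But Re s > 0 gives |s-1| < |s+1|, and |v^2 - 1| = 2|v||z| < 2|v| gives
  |s-1| <= |v|^2 |s+1|, which makes that equation impossible.
*)

section \<open>Degrees from growth at infinity\<close>

lemma tendsto_inverse_of_real_at_top:
  "((\<lambda>x. inverse (of_real x :: 'a::real_normed_div_algebra)) \<longlongrightarrow> 0) at_top"
  by (rule filterlim_compose[OF tendsto_inverse_0 filterlim_of_real_at_infinity])

lemma divide_power_split:
  fixes a x :: "'a::field"
  assumes "i \<le> d"
  shows "a / x ^ d = a / x ^ i * inverse x ^ (d - i)"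
proof -
  have "x ^ d = x ^ i * x ^ (d - i)"
    using assms by (simp flip: power_add)
  then show ?thesis
    by (simp add: divide_inverse power_inverse)
qed

lemma power_divide_mult_power_divide:
  fixes a b x :: "'a::field"
  shows "(a / x) ^ k * (b / x) ^ j = a ^ k * b ^ j / x ^ (k + j)"
  by (simp add: power_divide power_add)

lemma poly_altdef_le:
  fixes x :: "'a::{comm_semiring_0,semiring_1}"
  assumes "degree p \<le> n"
  shows "poly p x = (\<Sum>i\<le>n. coeff p i * x ^ i)"
  unfolding poly_altdef
  by (rule sum.mono_neutral_left) (use assms in \<open>auto simp: coeff_eq_0\<close>)

lemma tendsto_poly_div_power:
  fixes p :: "'a::real_normed_field poly" and f :: "real \<Rightarrow> 'a"
  assumes "degree p \<le> d" and "((\<lambda>x. f x / of_real x) \<longlongrightarrow> L) at_top"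
  shows "((\<lambda>x. poly p (f x) / of_real x ^ d) \<longlongrightarrow> coeff p d * L ^ d) at_top"
proof -
  have expand: "poly p (f x) / of_real x ^ d
      = (\<Sum>i\<le>d. coeff p i * (f x / of_real x) ^ i * inverse (of_real x) ^ (d - i))" for x
    by (simp add: poly_altdef_le[OF assms(1)] sum_divide_distrib divide_power_split[of _ d]
        power_divide mult.assoc)
  have "((\<lambda>x. \<Sum>i\<le>d. coeff p i * (f x / of_real x) ^ i * inverse (of_real x) ^ (d - i))
      \<longlongrightarrow> (\<Sum>i\<le>d. coeff p i * L ^ i * 0 ^ (d - i))) at_top"
    by (intro tendsto_intros assms(2) tendsto_inverse_of_real_at_top)
  also have "(\<Sum>i\<le>d. coeff p i * L ^ i * (0::'a) ^ (d - i)) = coeff p d * L ^ d"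
    by (subst sum.remove[of _ d]) (auto intro!: sum.neutral)
  finally show ?thesis
    by (simp only: expand)
qed

lemma degree_eq_if_tendsto_div_power:
  fixes p :: "'a::real_normed_field poly"
  assumes lim: "((\<lambda>x. poly p (of_real x) / of_real x ^ d) \<longlongrightarrow> c) at_top" and "c \<noteq> 0"
  shows "degree p = d"
proof -
  define D where "D = max (degree p) d"
  have "d \<le> D"
    by (simp add: D_def)
  have "((\<lambda>x. of_real x / of_real x :: 'a) \<longlongrightarrow> 1) at_top"
    by (rule tendsto_eventually) (use eventually_gt_at_top[of 0] in eventually_elim; simp)
  then have lim_D: "((\<lambda>x. poly p (of_real x) / of_real x ^ D) \<longlongrightarrow> coeff p D * 1 ^ D) at_top"
    by (rule tendsto_poly_div_power[rotated]) (simp add: D_def)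
  have "((\<lambda>x. poly p (of_real x) / of_real x ^ D) \<longlongrightarrow> c * 0 ^ (D - d)) at_top"
    unfolding divide_power_split[OF \<open>d \<le> D\<close>]
    by (intro tendsto_intros lim tendsto_inverse_of_real_at_top)
  from tendsto_unique[OF trivial_limit_at_top_linorder lim_D this]
  have coeff_D: "coeff p D = c * 0 ^ (D - d)"
    by simp
  have "D = d"
  proof (rule ccontr)
    assume "D \<noteq> d"
    then have "D = degree p" "degree p > d" by (auto simp: D_def)
    with coeff_D have "lead_coeff p = 0"
      by simp
    with \<open>degree p > d\<close> show False
      by simp
  qed
  then show ?thesis
    using coeff_D \<open>c \<noteq> 0\<close> le_degree[of p d] by (auto simp: D_def)
qed

lemma tendsto_poly_diff_div_power:
  fixes p :: "'a::real_normed_field poly" and f g :: "real \<Rightarrow> 'a"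
  assumes "degree p \<le> Suc d"
    and f: "((\<lambda>x. f x / of_real x) \<longlongrightarrow> L) at_top"
    and g: "((\<lambda>x. g x / of_real x) \<longlongrightarrow> L) at_top"
    and diff: "\<And>x. f x - g x = \<delta>"
  shows "((\<lambda>x. (poly p (f x) - poly p (g x)) / of_real x ^ d)
    \<longlongrightarrow> of_nat (Suc d) * \<delta> * coeff p (Suc d) * L ^ d) at_top"
proof -
  define c where "c = coeff p (Suc d)"
  define r where "r = p - monom c (Suc d)"
  have "degree r \<le> d"
    by (rule degree_le) (use assms(1) in \<open>auto simp: r_def c_def coeff_eq_0\<close>)
  have split: "(poly p (f x) - poly p (g x)) / of_real x ^ d
      = c * \<delta> * (\<Sum>i<Suc d. (g x / of_real x) ^ (d - i) * (f x / of_real x) ^ i)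
        + (poly r (f x) / of_real x ^ d - poly r (g x) / of_real x ^ d)" for x
  proof -
    have "poly p y = c * y ^ Suc d + poly r y" for y
      by (simp add: r_def poly_monom)
    then have "poly p (f x) - poly p (g x)
        = c * (f x ^ Suc d - g x ^ Suc d) + (poly r (f x) - poly r (g x))"
      by (simp add: algebra_simps)
    also have "f x ^ Suc d - g x ^ Suc d = \<delta> * (\<Sum>i<Suc d. g x ^ (d - i) * f x ^ i)"
      by (simp only: power_diff_sumr2 diff diff_Suc_Suc)
    finally have "(poly p (f x) - poly p (g x)) / of_real x ^ d
        = c * \<delta> * ((\<Sum>i<Suc d. g x ^ (d - i) * f x ^ i) / of_real x ^ d)
          + (poly r (f x) / of_real x ^ d - poly r (g x) / of_real x ^ d)"
      by (simp add: add_divide_distrib diff_divide_distrib mult.assoc del: sum.lessThan_Suc)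
    also have "(\<Sum>i<Suc d. g x ^ (d - i) * f x ^ i) / of_real x ^ d
        = (\<Sum>i<Suc d. (g x / of_real x) ^ (d - i) * (f x / of_real x) ^ i)"
      unfolding sum_divide_distrib
    proof (rule sum.cong[OF refl])
      fix i assume "i \<in> {..<Suc d}"
      then have "of_real x ^ d = of_real x ^ (d - i) * (of_real x ^ i :: 'a)"
        by (simp flip: power_add)
      then show "g x ^ (d - i) * f x ^ i / of_real x ^ d
          = (g x / of_real x) ^ (d - i) * (f x / of_real x) ^ i"
        by (simp add: power_divide)
    qed
    finally show ?thesis .
  qed
  have "((\<lambda>x. \<Sum>i<Suc d. (g x / of_real x) ^ (d - i) * (f x / of_real x) ^ i)
      \<longlongrightarrow> (\<Sum>i<Suc d. L ^ (d - i) * L ^ i)) at_top"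
    by (intro tendsto_intros f g)
  also have "(\<Sum>i<Suc d. L ^ (d - i) * L ^ i) = of_nat (Suc d) * L ^ d"
    by (simp flip: power_add)
  finally have "((\<lambda>x. (poly p (f x) - poly p (g x)) / of_real x ^ d)
      \<longlongrightarrow> c * \<delta> * (of_nat (Suc d) * L ^ d) + (coeff r d * L ^ d - coeff r d * L ^ d)) at_top"
    unfolding split
    by (intro tendsto_intros tendsto_poly_div_power[OF \<open>degree r \<le> d\<close>] f g)
  then show ?thesis
    by (simp add: c_def algebra_simps)
qed

section \<open>The polynomial \<open>\<rho>\<close>\<close>

lemma degree_chebT_le: "degree (chebT n) \<le> n"
proof (induction n rule: chebT.induct)
  case (3 k)
  have "degree ([:0, 2:] * chebT (Suc k)) \<le> Suc (Suc k)"
    using degree_mult_le[of "[:0, 2:]" "chebT (Suc k)"] "3.IH"(1) by simp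
  with "3.IH"(2) show ?case
    by (simp add: degree_diff_le)
qed auto

lemma coeff_chebT_self: "coeff (chebT n) n = 2 ^ (n - 1)"
proof (induction n rule: chebT.induct)
  case (3 k)
  have "coeff (chebT k) (Suc (Suc k)) = 0"
    using degree_chebT_le[of k] by (simp add: coeff_eq_0)
  with "3.IH"(1) show ?case
    by simp
qed auto

lemma poly_chebT_minus: "poly (chebT n) (- x) = (-1) ^ n * poly (chebT n) x"
  by (induction n rule: chebT.induct) (auto simp: algebra_simps)

lemma poly_rho: "poly (rho m n) t = poly (chebT n) (1 - 2 * t) + poly (chebT m) (1 + 2 * t)"
  by (simp add: rho_def poly_pcompose mult.commute)

lemma tendsto_rho_div_power:
  assumes "n \<le> m"
  shows "((\<lambda>t. poly (rho m n) t / t ^ m)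
    \<longlongrightarrow> coeff (chebT n) m * (-2) ^ m + 2 ^ (m - 1) * 2 ^ m) at_top"
proof -
  have "((\<lambda>t. poly (chebT n) (1 - 2 * t) / t ^ m) \<longlongrightarrow> coeff (chebT n) m * (-2) ^ m) at_top"
    by (rule tendsto_poly_div_power[where 'a=real, simplified])
      (use degree_chebT_le[of n] assms in simp, real_asymp)
  moreover have "((\<lambda>t. poly (chebT m) (1 + 2 * t) / t ^ m) \<longlongrightarrow> coeff (chebT m) m * 2 ^ m) at_top"
    by (rule tendsto_poly_div_power[where 'a=real, simplified, OF degree_chebT_le]) real_asymp
  ultimately show ?thesis
    by (simp add: poly_rho add_divide_distrib coeff_chebT_self tendsto_add)
qed

lemma tendsto_rho_diag_div_power:
  assumes "odd n"
  shows "((\<lambda>t. poly (rho n n) t / t ^ (n - 1))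
    \<longlongrightarrow> n * 2 * 2 ^ (n - 1) * 2 ^ (n - 1)) at_top"
proof -
  obtain d where n: "n = Suc d"
    using assms by (cases n) auto
  have "poly (rho n n) t = poly (chebT n) (1 + 2 * t) - poly (chebT n) (2 * t - 1)" for t
    using poly_chebT_minus[of n "2 * t - 1"] assms by (simp add: poly_rho)
  moreover have "((\<lambda>t. (poly (chebT n) (1 + 2 * t) - poly (chebT n) (2 * t - 1)) / t ^ d)
      \<longlongrightarrow> of_nat (Suc d) * 2 * coeff (chebT n) (Suc d) * 2 ^ d) at_top"
    by (rule tendsto_poly_diff_div_power[where 'a=real, unfolded of_real_eq_id id_def])
      (use degree_chebT_le[of n] n in simp, real_asymp, real_asymp, simp)
  moreover have "of_nat (Suc d) * 2 * coeff (chebT n) (Suc d) * 2 ^ d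
      = n * 2 * 2 ^ (n - 1) * 2 ^ (n - 1)"
    by (simp add: n coeff_chebT_self algebra_simps)
  ultimately show ?thesis
    by (simp add: n)
qed

lemma degree_rho:
  assumes "n \<le> m"
  shows "degree (rho m n) = (if m > n then m else 2 * (m div 2))"
proof (cases "n < m \<or> even n")
  case True
  have "coeff (chebT n) m * (-2) ^ m + 2 ^ (m - 1) * 2 ^ m \<noteq> (0::real)"
  proof (cases "n < m")
    case True
    then show ?thesis
      using degree_chebT_le[of n] by (simp add: coeff_eq_0)
  next
    case False
    with \<open>n \<le> m\<close> \<open>n < m \<or> even n\<close> have "m = n" "even m"
      by auto
    then show ?thesis
      by (simp add: coeff_chebT_self)
  qed
  then have "degree (rho m n) = m"
    by (rule degree_eq_if_tendsto_div_power[where 'a=real, unfolded of_real_eq_id id_def,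
          OF tendsto_rho_div_power[OF assms]])
  moreover have "even m" if "\<not> n < m"
    using True that assms by simp
  ultimately show ?thesis
    by simp
next
  case False
  with assms have "m = n" "odd n"
    by auto
  have "degree (rho n n) = n - 1"
    by (rule degree_eq_if_tendsto_div_power[where 'a=real, unfolded of_real_eq_id id_def,
          OF tendsto_rho_diag_div_power[OF \<open>odd n\<close>]])
      (use \<open>odd n\<close> in \<open>auto intro: odd_pos\<close>)
  with \<open>m = n\<close> \<open>odd n\<close> show ?thesis
    by simp
qed

section \<open>h as a polynomial and its degree\<close>

lemma binomial_product_expansion:
  fixes s z :: "'a::comm_semiring_1"
  shows "(s + 1) ^ k * (s + z) ^ j
    = (\<Sum>a\<le>k. \<Sum>b\<le>j. of_nat (k choose a) * of_nat (j choose b) * s ^ (a + b) * z ^ (j - b))"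
  unfolding binomial_ring[of s 1 k] binomial_ring[of s z j] sum_product
  by (intro sum.cong refl) (simp add: power_add algebra_simps)

lemma power_add_power_minus:
  fixes s :: "'a::comm_ring_1"
  assumes "s ^ 2 = w"
  shows "s ^ i + (- s) ^ i = (1 + (-1) ^ i) * w ^ (i div 2)"
proof (cases "even i")
  case True
  then have "s ^ i = w ^ (i div 2)"
    using assms by (metis dvd_mult_div_cancel power_mult)
  with True show ?thesis
    by simp
qed simp

(* Binomial expansion of hfun in s = csqrt (z^2 + 1): the factor 1 + (-1)^(a+b) removes
   the odd powers of s, and each even power s^(a+b) becomes (z^2 + 1)^((a+b) div 2). *)
definition hpoly :: "nat \<Rightarrow> nat \<Rightarrow> complex poly" where
  "hpoly m n = smult (1 / complex_of_real (sqrt 2))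
     (\<Sum>a\<le>(m + n) div 2. \<Sum>b\<le>(m - n) div 2.
        smult (of_nat ((m + n) div 2 choose a) * of_nat ((m - n) div 2 choose b)
            * (1 + (-1) ^ (a + b)))
          ([:1, 0, 1:] ^ ((a + b) div 2) * monom 1 ((m - n) div 2 - b)))"

lemma poly_hpoly:
  assumes "n \<le> m" and "even (m + n)"
  shows "poly (hpoly m n) z = hfun m n z"
proof -
  define k where "k = (m + n) div 2"
  define j where "j = (m - n) div 2"
  define s where "s = csqrt (z^2 + 1)"
  have "(-1) ^ n = (-1 :: complex) ^ (k + j)"
    using assms by (simp add: k_def j_def minus_one_power_iff) presburger
  then have "(-1) ^ n * (s - 1) ^ k * (s - z) ^ j = (- s + 1) ^ k * (- s + z) ^ j"
    by (simp add: power_add power_mult_distrib[symmetric] algebra_simps)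
  then have "hfun m n z = (1 / complex_of_real (sqrt 2)) *
      ((s + 1) ^ k * (s + z) ^ j + (- s + 1) ^ k * (- s + z) ^ j)"
    by (simp add: hfun_def Let_def s_def k_def j_def mult.assoc)
  also have "\<dots> = (1 / complex_of_real (sqrt 2)) *
      (\<Sum>a\<le>k. \<Sum>b\<le>j. of_nat (k choose a) * of_nat (j choose b) *
        (s ^ (a + b) + (- s) ^ (a + b)) * z ^ (j - b))"
    unfolding binomial_product_expansion sum.distrib[symmetric] by (simp add: algebra_simps)
  also have "\<dots> = (1 / complex_of_real (sqrt 2)) *
      (\<Sum>a\<le>k. \<Sum>b\<le>j. of_nat (k choose a) * of_nat (j choose b) *
        (1 + (-1) ^ (a + b)) * (z^2 + 1) ^ ((a + b) div 2) * z ^ (j - b))"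
    unfolding power_add_power_minus[where w="z^2 + 1", OF power2_csqrt, folded s_def]
    by (simp add: mult.assoc)
  also have "\<dots> = poly (hpoly m n) z"
    by (simp add: hpoly_def k_def[symmetric] j_def[symmetric] poly_sum poly_monom
        power2_eq_square algebra_simps)
  finally show ?thesis ..
qed

definition hreal :: "nat \<Rightarrow> nat \<Rightarrow> real \<Rightarrow> real" where
  "hreal m n x = (let s = sqrt (x^2 + 1) in
     ((s + 1) ^ ((m + n) div 2) * (s + x) ^ ((m - n) div 2)
      + (-1) ^ n * (s - 1) ^ ((m + n) div 2) * (s - x) ^ ((m - n) div 2)) / sqrt 2)"

lemma hfun_of_real: "hfun m n (of_real x) = of_real (hreal m n x)"
proof -
  have "csqrt ((of_real x)^2 + 1) = of_real (sqrt (x^2 + 1))"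
    using of_real_sqrt[of "x^2 + 1"] by simp
  then show ?thesis
    by (simp add: hfun_def hreal_def Let_def field_simps)
qed

lemma degree_hpoly_eq_if_tendsto:
  assumes "n \<le> m" and "even (m + n)"
    and "((\<lambda>x. hreal m n x / x ^ d) \<longlongrightarrow> c) at_top" and "c \<noteq> 0"
  shows "degree (hpoly m n) = d"
proof (rule degree_eq_if_tendsto_div_power)
  show "((\<lambda>x. poly (hpoly m n) (of_real x) / of_real x ^ d) \<longlongrightarrow> of_real c) at_top"
    using tendsto_of_real[OF assms(3), where 'a=complex]
    by (simp add: poly_hpoly[OF assms(1,2)] hfun_of_real)
qed (use assms(4) in simp)

lemma tendsto_hreal_div_power:
  assumes "n \<le> m" and "even (m + n)"
  shows "((\<lambda>x. hreal m n x / x ^ m)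
    \<longlongrightarrow> (2 ^ ((m - n) div 2) + (-1) ^ n * 0 ^ ((m - n) div 2)) / sqrt 2) at_top"
proof -
  define k where "k = (m + n) div 2"
  define j where "j = (m - n) div 2"
  have "m = k + j"
    using assms by (simp add: k_def j_def) presburger
  have split: "hreal m n x / x ^ m = (((sqrt (x^2 + 1) + 1) / x) ^ k * ((sqrt (x^2 + 1) + x) / x) ^ j
      + (-1) ^ n * ((sqrt (x^2 + 1) - 1) / x) ^ k * ((sqrt (x^2 + 1) - x) / x) ^ j) / sqrt 2" for x
    unfolding hreal_def Let_def k_def[symmetric] j_def[symmetric]
    unfolding \<open>m = k + j\<close> power_divide_mult_power_divide mult.assoc[of "(-1) ^ n"]
    by (simp add: divide_inverse algebra_simps)
  have "((\<lambda>x::real. (sqrt (x^2 + 1) + 1) / x) \<longlongrightarrow> 1) at_top"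
    "((\<lambda>x::real. (sqrt (x^2 + 1) - 1) / x) \<longlongrightarrow> 1) at_top"
    "((\<lambda>x::real. (sqrt (x^2 + 1) + x) / x) \<longlongrightarrow> 2) at_top"
    "((\<lambda>x::real. (sqrt (x^2 + 1) - x) / x) \<longlongrightarrow> 0) at_top"
    by real_asymp+
  then have "((\<lambda>x. (((sqrt (x^2 + 1) + 1) / x) ^ k * ((sqrt (x^2 + 1) + x) / x) ^ j
      + (-1) ^ n * ((sqrt (x^2 + 1) - 1) / x) ^ k * ((sqrt (x^2 + 1) - x) / x) ^ j) / sqrt 2)
      \<longlongrightarrow> (1 ^ k * 2 ^ j + (-1) ^ n * 1 ^ k * 0 ^ j) / sqrt 2) at_top"
    by (intro tendsto_intros) auto
  then show ?thesis
    unfolding split j_def[symmetric] by simp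
qed

lemma tendsto_hreal_diag_div_power:
  assumes "odd n"
  shows "((\<lambda>x. hreal n n x / x ^ (n - 1)) \<longlongrightarrow> 2 * n / sqrt 2) at_top"
proof -
  obtain d where n: "n = Suc d"
    using assms by (cases n) auto
  define \<Delta> where
    "\<Delta> x = poly (monom 1 n) (sqrt (x^2 + 1) + 1) - poly (monom 1 n) (sqrt (x^2 + 1) - 1)"
    for x :: real
  define c where "c = of_nat (Suc d) * 2 * coeff (monom 1 n) (Suc d) * (1::real) ^ d"
  have "((\<lambda>x. \<Delta> x / x ^ d) \<longlongrightarrow> c) at_top"
    unfolding \<Delta>_def c_def
  proof (rule tendsto_poly_diff_div_power[where 'a=real, unfolded of_real_eq_id id_def])
    show "degree (monom (1::real) n) \<le> Suc d"
      using n degree_monom_le by simp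
    show "((\<lambda>x::real. (sqrt (x^2 + 1) + 1) / x) \<longlongrightarrow> 1) at_top"
      by real_asymp
    show "((\<lambda>x::real. (sqrt (x^2 + 1) - 1) / x) \<longlongrightarrow> 1) at_top"
      by real_asymp
  qed simp
  then have "((\<lambda>x. \<Delta> x / x ^ d / sqrt 2) \<longlongrightarrow> c / sqrt 2) at_top"
    by (rule tendsto_divide[OF _ tendsto_const]) simp
  moreover have "\<Delta> x / x ^ d / sqrt 2 = hreal n n x / x ^ (n - 1)" for x
    using assms by (simp add: \<Delta>_def hreal_def Let_def poly_monom n)
  moreover have "c / sqrt 2 = 2 * n / sqrt 2"
    by (simp add: c_def n)
  ultimately show ?thesis
    by simp
qed

lemma degree_hpoly:
  assumes "n \<le> m" and "even (m + n)"
  shows "degree (hpoly m n) = (if m > n then m else 2 * (m div 2))"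
proof (cases "n < m \<or> even n")
  case True
  have "(2 ^ ((m - n) div 2) + (-1) ^ n * 0 ^ ((m - n) div 2)) / sqrt 2 \<noteq> (0::real)"
  proof (cases "n < m")
    case True
    with assms have "(m - n) div 2 \<noteq> 0"
      by presburger
    then show ?thesis
      by (simp add: power_0_left)
  next
    case False
    with \<open>n < m \<or> even n\<close> show ?thesis
      by simp
  qed
  then have "degree (hpoly m n) = m"
    by (rule degree_hpoly_eq_if_tendsto[OF assms tendsto_hreal_div_power[OF assms]])
  moreover have "even m" if "\<not> n < m"
    using True that assms(1) by simp
  ultimately show ?thesis
    by simp
next
  case False
  with assms have "m = n" "odd n"
    by auto
  have "degree (hpoly n n) = n - 1"
    by (rule degree_hpoly_eq_if_tendsto[OF _ _ tendsto_hreal_diag_div_power[OF \<open>odd n\<close>]])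
      (use \<open>odd n\<close> in \<open>auto intro: odd_pos\<close>)
  with \<open>m = n\<close> \<open>odd n\<close> show ?thesis
    by simp
qed

section \<open>h has no zeros in the unit disc\<close>

lemma Re_csqrt_pos:
  assumes "w \<notin> \<real>\<^sub>\<le>\<^sub>0"
  shows "0 < Re (csqrt w)"
proof (rule ccontr)
  define y where "y = Im (csqrt w)"
  assume "\<not> 0 < Re (csqrt w)"
  then have "Re (csqrt w) = 0"
    using Re_csqrt[of w] by linarith
  then have "csqrt w = \<i> * of_real y"
    by (simp add: complex_eq_iff y_def del: csqrt.simps)
  then have "w = (\<i> * of_real y) ^ 2"
    by (metis power2_csqrt)
  then have "w = of_real (- (y ^ 2))"
    by (simp add: power_mult_distrib)
  moreover have "of_real (- (y ^ 2)) \<in> \<real>\<^sub>\<le>\<^sub>0"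
    by (simp only: nonpos_Reals_of_real_iff) simp
  ultimately show False
    using assms by blast
qed

lemma power2_plus_one_notin_nonpos_Reals:
  assumes "cmod z < 1"
  shows "z^2 + 1 \<notin> \<real>\<^sub>\<le>\<^sub>0"
proof
  assume "z^2 + 1 \<in> \<real>\<^sub>\<le>\<^sub>0"
  then obtain r where "z^2 + 1 = of_real r" "r \<le> 0"
    by (rule nonpos_Reals_cases)
  then have "z^2 = of_real (r - 1)"
    by (simp add: eq_diff_eq)
  then have "cmod z ^ 2 = \<bar>r - 1\<bar>"
    by (metis norm_power norm_of_real)
  moreover have "cmod z ^ 2 < 1"
    using assms by (simp add: power_less_one_iff)
  ultimately show False
    using \<open>r \<le> 0\<close> by simp
qed

lemma norm_diff_one_le_norm_mult_norm_add_one: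
  fixes v :: complex
  assumes "0 < Re v" and "cmod (v^2 - 1) < 2 * cmod v"
  shows "cmod (v - 1) \<le> cmod v * cmod (v + 1)"
proof -
  define a where "a = Re v"
  define b where "b = Im v"
  define r where "r = a ^ 2 + b ^ 2"
  have norm_v: "cmod v ^ 2 = r"
    by (simp add: r_def a_def b_def cmod_power2)
  have "cmod (v^2 - 1) ^ 2 = (a ^ 2 - b ^ 2 - 1) ^ 2 + (2 * a * b) ^ 2"
    by (simp only: cmod_power2) (simp add: Re_power2 Im_power2 a_def b_def)
  also have "\<dots> = (r + 1) ^ 2 - 4 * a ^ 2"
    by (simp add: r_def power2_eq_square algebra_simps)
  finally have "(r + 1) ^ 2 - 4 * a ^ 2 < 4 * r"
    using power_strict_mono[OF assms(2), of 2] by (simp add: power_mult_distrib norm_v)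
  then have "(1 - r) ^ 2 < (2 * a) ^ 2"
    by (simp add: power2_eq_square algebra_simps)
  then have "1 - r < 2 * a"
    by (rule power2_less_imp_less) (use assms(1) in \<open>simp add: a_def\<close>)
  moreover have "0 \<le> r"
    by (simp add: r_def)
  ultimately have "0 \<le> (r + 1) * (r - 1 + 2 * a)"
    by (intro mult_nonneg_nonneg) auto
  moreover have "cmod (v - 1) ^ 2 = r - 2 * a + 1"
    by (simp only: cmod_power2) (simp add: r_def a_def b_def power2_eq_square algebra_simps)
  moreover have "(cmod v * cmod (v + 1)) ^ 2 = r * (r + 2 * a + 1)"
    unfolding power_mult_distrib norm_v
    by (simp only: cmod_power2) (simp add: r_def a_def b_def power2_eq_square algebra_simps)
  moreover have "(r + 1) * (r - 1 + 2 * a) = r * (r + 2 * a + 1) - (r - 2 * a + 1)"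
    by (simp add: algebra_simps)
  ultimately have "cmod (v - 1) ^ 2 \<le> (cmod v * cmod (v + 1)) ^ 2"
    by linarith
  then show ?thesis
    by (rule power2_le_imp_le) simp
qed

lemma power_neq_power_of_le:
  fixes q u :: real
  assumes "0 \<le> q" "q < 1" "0 < u" "q \<le> u" "j < k"
  shows "q ^ k \<noteq> u ^ j"
proof (cases "u < 1")
  case True
  have "q ^ k \<le> u ^ k"
    using assms by (intro power_mono) auto
  also have "\<dots> < u ^ j"
    using True assms by (intro power_strict_decreasing) auto
  finally show ?thesis
    by simp
next
  case False
  have "q ^ k < 1"
    using assms by (simp add: power_less_one_iff)
  also have "1 \<le> u ^ j"
    using False by (intro one_le_power) simp
  finally show ?thesis
    by simp
qed

lemma norm_diff_one_le_norm_power2_mult_norm_add_one: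
  fixes s z :: complex
  assumes "s^2 = z^2 + 1" and "0 < Re s" and "cmod z < 1"
  shows "cmod (s - 1) \<le> cmod (s + z) ^ 2 * cmod (s + 1)"
proof -
  define v where "v = s + z"
  have vw: "(s - z) * v = 1"
    using assms(1) by (simp add: v_def power2_eq_square algebra_simps)
  then have "v \<noteq> 0"
    by auto
  have "(v + 1)^2 - 2 * v * (s + 1) = z^2 + 1 - s^2" "(v - 1)^2 - 2 * v * (s - 1) = z^2 + 1 - s^2"
    by (simp_all add: v_def power2_eq_square algebra_simps)
  then have plus: "2 * v * (s + 1) = (v + 1)^2" and minus: "2 * v * (s - 1) = (v - 1)^2"
    using assms(1) by simp_all
  have "(s - z) * of_real (cmod v ^ 2) = ((s - z) * v) * cnj v"
    by (simp only: complex_norm_square mult.assoc)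
  also have "\<dots> = cnj v"
    by (simp add: vw)
  finally have "(s - z) * of_real (cmod v ^ 2) = cnj v" .
  \<comment> \<open>s - z = 1/v, and Re (1/v) = Re v / |v|^2 has the sign of Re v; hence so does Re s\<close>
  from arg_cong[OF this, of Re] have Re_inverse_v: "Re (s - z) * cmod v ^ 2 = Re v"
    by simp
  have "2 * Re s * cmod v ^ 2 = (Re v + Re (s - z)) * cmod v ^ 2"
    by (simp add: v_def)
  also have "\<dots> = Re v * (cmod v ^ 2 + 1)"
    by (simp only: distrib_right Re_inverse_v) (simp add: algebra_simps)
  finally have "2 * Re s * cmod v ^ 2 = Re v * (cmod v ^ 2 + 1)" .
  moreover have "0 < 2 * Re s * cmod v ^ 2"
    using assms(2) \<open>v \<noteq> 0\<close> by simp
  moreover have "0 < cmod v ^ 2 + 1"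
    by (simp add: add_nonneg_pos)
  ultimately have "0 < Re v"
    by (metis zero_less_mult_pos2)
  moreover have "cmod (v^2 - 1) < 2 * cmod v"
  proof -
    have "v^2 - 1 = 2 * v * z"
      using vw by (simp add: v_def power2_eq_square algebra_simps)
    then show ?thesis
      using assms(3) \<open>v \<noteq> 0\<close> by (simp add: norm_mult)
  qed
  ultimately have "cmod (v - 1) \<le> cmod v * cmod (v + 1)"
    by (rule norm_diff_one_le_norm_mult_norm_add_one)
  then have "cmod (v - 1) ^ 2 \<le> cmod v ^ 2 * cmod (v + 1) ^ 2"
    by (simp add: power_mono flip: power_mult_distrib)
  then have "cmod (2 * v * (s - 1)) \<le> cmod v ^ 2 * cmod (2 * v * (s + 1))"
    by (simp only: plus minus norm_power)
  moreover have "cmod (2 * v * (s - 1)) = 2 * cmod v * cmod (s - 1)"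
    "cmod (2 * v * (s + 1)) = 2 * cmod v * cmod (s + 1)"
    by (simp_all only: norm_mult) simp_all
  ultimately have "2 * cmod v * cmod (s - 1) \<le> 2 * cmod v * (cmod v ^ 2 * cmod (s + 1))"
    by (simp only: mult.left_commute[of "cmod v ^ 2"])
  then show ?thesis
    using \<open>v \<noteq> 0\<close> by (simp add: v_def)
qed

lemma norm_diff_one_less_norm_add_one:
  fixes s :: complex
  assumes "0 < Re s"
  shows "cmod (s - 1) < cmod (s + 1)"
proof (rule power_less_imp_less_base)
  show "cmod (s - 1) ^ 2 < cmod (s + 1) ^ 2"
    using assms by (simp only: cmod_power2) (simp add: power2_eq_square algebra_simps)
qed simp

lemma hfun_nonzero:
  assumes "1 \<le> n" and "n \<le> m" and "cmod z < 1"
  shows "hfun m n z \<noteq> 0"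
proof
  assume "hfun m n z = 0"
  define k where "k = (m + n) div 2"
  define j where "j = (m - n) div 2"
  define s where "s = csqrt (z^2 + 1)"
  define v where "v = s + z"
  have "j < k"
    using assms(1,2) by (simp add: k_def j_def)
  have s2: "s^2 = z^2 + 1"
    by (simp add: s_def)
  have "0 < Re s"
    unfolding s_def by (rule Re_csqrt_pos[OF power2_plus_one_notin_nonpos_Reals[OF assms(3)]])
  have vw: "(s - z) * v = 1"
    using s2 by (simp add: v_def power2_eq_square algebra_simps)
  then have "v \<noteq> 0"
    by auto
  from \<open>hfun m n z = 0\<close> have "(s + 1) ^ k * v ^ j = - ((-1) ^ n * (s - 1) ^ k * (s - z) ^ j)"
    by (simp add: hfun_def Let_def s_def k_def j_def v_def eq_neg_iff_add_eq_0)
  then have "(s + 1) ^ k * v ^ j * v ^ j = - ((-1) ^ n * (s - 1) ^ k * ((s - z) * v) ^ j)"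
    by (simp add: power_mult_distrib)
  then have "cmod ((s + 1) ^ k * v ^ j * v ^ j) = cmod ((s - 1) ^ k)"
    by (simp add: vw norm_mult norm_power)
  then have norm_eq: "cmod (s - 1) ^ k = cmod (s + 1) ^ k * (cmod v ^ 2) ^ j"
    by (simp add: norm_mult norm_power power2_eq_square power_mult_distrib mult.assoc)
  have "0 < cmod (s + 1)"
    using norm_diff_one_less_norm_add_one[OF \<open>0 < Re s\<close>] by (meson le_less_trans norm_ge_zero)
  then have "(cmod (s - 1) / cmod (s + 1)) ^ k = (cmod v ^ 2) ^ j"
    unfolding power_divide norm_eq by simp
  moreover have "cmod (s - 1) / cmod (s + 1) \<le> cmod v ^ 2"
    using norm_diff_one_le_norm_power2_mult_norm_add_one[OF s2 \<open>0 < Re s\<close> assms(3)]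
      \<open>0 < cmod (s + 1)\<close>
    by (simp add: v_def divide_le_eq)
  moreover have "cmod (s - 1) / cmod (s + 1) < 1"
    using norm_diff_one_less_norm_add_one[OF \<open>0 < Re s\<close>] \<open>0 < cmod (s + 1)\<close> by simp
  ultimately show False
    using power_neq_power_of_le[OF _ _ _ _ \<open>j < k\<close>] \<open>v \<noteq> 0\<close> by simp
qed

lemma hfun_at_zero:
  assumes "1 \<le> n" and "n \<le> m"
  shows "hfun m n 0 = of_real (2 ^ ((m + n) div 2) / sqrt 2)"
proof -
  have "(m + n) div 2 \<noteq> 0"
    using assms by presburger
  then show ?thesis
    by (simp add: hfun_def power_0_left)
qed

theorem mainTheorem2:
  fixes m n :: nat
  assumes "n \<ge> 1" and "m \<ge> n" and "even (m + n)"
  shows "degree (rho m n) = (if m > n then m else 2 * (m div 2))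
    \<and> (\<exists>p :: complex poly. (\<forall>z. poly p z = hfun m n z)
         \<and> degree p = degree (rho m n)
         \<and> Im (hfun m n 0) = 0 \<and> Re (hfun m n 0) > 0
         \<and> (\<forall>z. cmod z < 1 \<longrightarrow> hfun m n z \<noteq> 0))"
proof (intro conjI exI allI impI)
  show "degree (rho m n) = (if m > n then m else 2 * (m div 2))"
    using degree_rho assms(2) .
  show "poly (hpoly m n) z = hfun m n z" for z
    using poly_hpoly assms(2,3) .
  show "degree (hpoly m n) = degree (rho m n)"
    using degree_hpoly degree_rho assms(2,3) by simp
  show "Im (hfun m n 0) = 0" and "Re (hfun m n 0) > 0"
    using hfun_at_zero[OF assms(1,2)] by simp_all
  show "hfun m n z \<noteq> 0" if "cmod z < 1" for z
    using hfun_nonzero assms(1,2) that .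
qed

end
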